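(* Let $(S^\Omega,\mathcal T)$ be a resource theory with a currency $\mathcal C$ (value function $\mathrm{Val}$) independent of its target $\mathcal S$, and assume $\mathcal C$ is good for the poor. Let $V,W\in\mathcal S$ and $C_1,C_1'\in\mathcal C$ with $\mathrm{Val}(C_1)\ge\mathrm{Val}(C_1')$, and suppose that for every $C_2\in\mathcal C$ with $V\cap C_1\to W\cap C_2$ one has $\mathrm{Val}(C_1')\ge\mathrm{Val}(C_1)-\mathrm{Val}(C_2)$. Then $$\mathrm{Balance}(V\to W\mid C_1)\le \mathrm{Balance}(V\to W\mid C_1').$$
   Context: A resource theory $(S^\Omega,\mathcal T)$ consists of a set $\Omega$, the specification space $S^\Omega$ of all non-empty subsets of $\Omega$ (resources), and a set $\mathcal T$ of maps $f:S^\Omega\to S^\Omega$ acting element-wise, $f(V)=\bigcup_{\nu\in V} f(\{\nu\})$. $V\to W$ iff some $f\in\mathcal T$ has $f(V)\subseteq W$; $\to$ is assumed to be a pre-order. $\mathcal C\subseteq S^\Omega$ is a currency for target $\mathcal S\subseteq S^\Omega$ if (Order) any two elements of $\mathcal C$ are comparable under $\to$ and $\Omega\in\mathcal C$; (Universality) $\Omega\in\mathcal S$ and every $V\in\mathcal S$ has $C,C'\in\mathcal C$ with $C\to V$, $V\to C'$. A value function $\mathrm{Val}:\mathcal C\to\mathbb R_{\ge0}$ satisfies $\mathrm{Val}(C')\ge\mathrm{Val}(C)\iff C'\to C$ and $\mathrm{Val}(\Omega)=0$; $c_{\sup}=\sup_{C\in\mathcal C}\mathrm{Val}(C)$ (possibly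 $\infty$). Independence: $C\cap V\ne\emptyset$ for all $C\in\mathcal C,V\in\mathcal S$, and $C\to C'$ implies $C\cap V\to C'\cap V$ for all $V\in\mathcal S$. Balance: $\mathrm{Balance}(V\to W\mid C)=\sup\{\mathrm{Val}(C')-\mathrm{Val}(C): C'\in\mathcal C,\ V\cap C\to W\cap C'\}$ (with $\sup\emptyset=-\infty$). Fairness conditions: for $V,W\in\mathcal S$ and $C_1,C_2\in\mathcal C$ with $V\cap C_1\to W\cap C_2$, let $\Delta=\mathrm{Val}(C_2)-\mathrm{Val}(C_1)$. (F1): for a given $C_1'\in\mathcal C$ with $-\Delta\le\mathrm{Val}(C_1')<c_{\sup}-\Delta$ there is $C_2'\in\mathcal C$ with $V\cap C_1'\to W\cap C_2'$ and $\mathrm{Val}(C_2')-\mathrm{Val}(C_1')=\Delta$. (F2): for a given $C_2'\in\mathcal C$ with $\Delta\le\mathrm{Val}(C_2')$ there is $C_1'\in\mathcal C$ with $V\cap C_1'\to W\cap C_2'$ and $\mathrm{Val}(C_2')-\mathrm{Val}(C_1')=\Delta$. The currency is good for the poor if, for all such data, (F1) holds for every admissible $C_1'$ with $\mathrm{Val}(C_1')\le\mathrm{Val}(C_1)$ and (F2) holds for every admissible $C_2'$ with $\mathrm{Val}(C_2')\le\mathrm{Val}(C_2)$. *)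

theory Defs
  imports "HOL-Library.Extended_Real"
begin

definition spec_space :: "'a set \<Rightarrow> 'a set set" where
  "spec_space Omega = {V. V \<subseteq> Omega \<and> V \<noteq> {}}"

definition conv :: "('a set \<Rightarrow> 'a set) set \<Rightarrow> 'a set \<Rightarrow> 'a set \<Rightarrow> bool" where
  "conv T V W \<longleftrightarrow> (\<exists>f\<in>T. f V \<subseteq> W)"

definition resource_theory :: "'a set \<Rightarrow> ('a set \<Rightarrow> 'a set) set \<Rightarrow> bool" where
  "resource_theory Omega T \<longleftrightarrow>
     (\<forall>f\<in>T. \<forall>V\<in>spec_space Omega. f V \<in> spec_space Omega
                                    \<and> f V = (\<Union>\<nu>\<in>V. f {\<nu>})) \<and>
     (\<forall>V\<in>spec_space Omega. conv T V V) \<and>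
     (\<forall>U\<in>spec_space Omega. \<forall>V\<in>spec_space Omega. \<forall>W\<in>spec_space Omega.
        conv T U V \<longrightarrow> conv T V W \<longrightarrow> conv T U W)"

definition currency ::
  "'a set \<Rightarrow> ('a set \<Rightarrow> 'a set) set \<Rightarrow> 'a set set \<Rightarrow> 'a set set \<Rightarrow> bool" where
  "currency Omega T Cs S \<longleftrightarrow>
     Cs \<subseteq> spec_space Omega \<and> S \<subseteq> spec_space Omega \<and>
     (\<forall>C\<in>Cs. \<forall>C'\<in>Cs. conv T C C' \<or> conv T C' C) \<and> Omega \<in> Cs \<and>
     Omega \<in> S \<and>
     (\<forall>V\<in>S. \<exists>C\<in>Cs. \<exists>C'\<in>Cs. conv T C V \<and> conv T V C')"

definition value_function ::
  "('a set \<Rightarrow> 'a set) set \<Rightarrow> 'a set \<Rightarrow> 'a set set \<Rightarrow> ('a set \<Rightarrow> real) \<Rightarrow> bool" where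
  "value_function T Omega Cs Val \<longleftrightarrow>
     (\<forall>C\<in>Cs. Val C \<ge> 0) \<and>
     (\<forall>C\<in>Cs. \<forall>C'\<in>Cs. Val C' \<ge> Val C \<longleftrightarrow> conv T C' C) \<and>
     Val Omega = 0"

definition c_sup :: "'a set set \<Rightarrow> ('a set \<Rightarrow> real) \<Rightarrow> ereal" where
  "c_sup Cs Val = (SUP C\<in>Cs. ereal (Val C))"

definition independent ::
  "('a set \<Rightarrow> 'a set) set \<Rightarrow> 'a set set \<Rightarrow> 'a set set \<Rightarrow> bool" where
  "independent T Cs S \<longleftrightarrow>
     (\<forall>C\<in>Cs. \<forall>V\<in>S. C \<inter> V \<noteq> {}) \<and>
     (\<forall>C\<in>Cs. \<forall>C'\<in>Cs. conv T C C' \<longrightarrow> (\<forall>V\<in>S. conv T (C \<inter> V) (C' \<inter> V)))"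

text \<open>Balance; the supremum of the empty set is -\<infinity> (bot of ereal).\<close>
definition balance ::
  "('a set \<Rightarrow> 'a set) set \<Rightarrow> 'a set set \<Rightarrow> ('a set \<Rightarrow> real) \<Rightarrow> 'a set \<Rightarrow> 'a set \<Rightarrow> 'a set \<Rightarrow> ereal" where
  "balance T Cs Val V W C =
     (SUP C'\<in>{C'\<in>Cs. conv T (V \<inter> C) (W \<inter> C')}. ereal (Val C' - Val C))"

text \<open>Good for the poor: (F1) for all admissible C1' with Val C1' \<le> Val C1 and
  (F2) for all admissible C2' with Val C2' \<le> Val C2.\<close>
definition good_for_poor ::
  "('a set \<Rightarrow> 'a set) set \<Rightarrow> 'a set set \<Rightarrow> 'a set set \<Rightarrow> ('a set \<Rightarrow> real) \<Rightarrow> bool" where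
  "good_for_poor T Cs S Val \<longleftrightarrow>
     (\<forall>V\<in>S. \<forall>W\<in>S. \<forall>C1\<in>Cs. \<forall>C2\<in>Cs. conv T (V \<inter> C1) (W \<inter> C2) \<longrightarrow>
       (let \<Delta> = Val C2 - Val C1 in
         (\<forall>C1'\<in>Cs. - \<Delta> \<le> Val C1' \<and> ereal (Val C1') < c_sup Cs Val - ereal \<Delta>
                     \<and> Val C1' \<le> Val C1 \<longrightarrow>
            (\<exists>C2'\<in>Cs. conv T (V \<inter> C1') (W \<inter> C2') \<and> Val C2' - Val C1' = \<Delta>)) \<and>
         (\<forall>C2'\<in>Cs. \<Delta> \<le> Val C2' \<and> Val C2' \<le> Val C2 \<longrightarrow>
            (\<exists>C1'\<in>Cs. conv T (V \<inter> C1') (W \<inter> C2') \<and> Val C2' - Val C1' = \<Delta>))))"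

end

theory Submission
  imports Defs
begin

text \<open>Every exchange available with currency \<open>C1\<close> must be matched, with the same net gain,
  by one available with \<open>C1'\<close>. If \<open>C1'\<close> is worth as much as \<open>C1\<close>, the same exchange works by
  independence; otherwise \<open>C1'\<close> is strictly poorer and the bound on the assumed losses makes
  \<open>C1'\<close> admissible for fairness condition (F1), which the good-for-the-poor property grants.\<close>

lemma balance_le_balanceI:
  assumes "\<And>C2. C2 \<in> Cs \<Longrightarrow> conv T (V \<inter> C1) (W \<inter> C2) \<Longrightarrow>
             \<exists>C2'\<in>Cs. conv T (V \<inter> C1') (W \<inter> C2') \<and> Val C2' - Val C1' = Val C2 - Val C1"
  shows "balance T Cs Val V W C1 \<le> balance T Cs Val V W C1'"
  unfolding balance_def
proof (rule SUP_least)
  fix C2 assume "C2 \<in> {C'\<in>Cs. conv T (V \<inter> C1) (W \<inter> C')}"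
  then obtain C2' where "C2' \<in> Cs" "conv T (V \<inter> C1') (W \<inter> C2')"
    and gain: "Val C2' - Val C1' = Val C2 - Val C1"
    using assms by blast
  then have "ereal (Val C2' - Val C1')
      \<le> (SUP C'\<in>{C'\<in>Cs. conv T (V \<inter> C1') (W \<inter> C')}. ereal (Val C' - Val C1'))"
    by (intro SUP_upper) auto
  then show "ereal (Val C2 - Val C1)
      \<le> (SUP C'\<in>{C'\<in>Cs. conv T (V \<inter> C1') (W \<inter> C')}. ereal (Val C' - Val C1'))"
    by (simp add: gain)
qed

lemma currency_inter_target_in_spec_space:
  assumes "currency Omega T Cs S" "independent T Cs S" "C \<in> Cs" "X \<in> S"
  shows "C \<inter> X \<in> spec_space Omega"
proof -
  have "Cs \<subseteq> spec_space Omega"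
    using assms(1) unfolding currency_def by (rule conjunct1)
  with assms(3) have "C \<subseteq> Omega"
    unfolding spec_space_def by blast
  moreover have "\<forall>C\<in>Cs. \<forall>V\<in>S. C \<inter> V \<noteq> {}"
    using assms(2) unfolding independent_def by (rule conjunct1)
  with assms(3,4) have "C \<inter> X \<noteq> {}" by blast
  ultimately show ?thesis
    unfolding spec_space_def by blast
qed

lemma resource_theory_conv_trans:
  assumes "resource_theory Omega T"
    and "U \<in> spec_space Omega" "V \<in> spec_space Omega" "W \<in> spec_space Omega"
    and "conv T U V" "conv T V W"
  shows "conv T U W"
proof -
  have "\<forall>U\<in>spec_space Omega. \<forall>V\<in>spec_space Omega. \<forall>W\<in>spec_space Omega.
          conv T U V \<longrightarrow> conv T V W \<longrightarrow> conv T U W"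
    using assms(1) unfolding resource_theory_def by (elim conjE)
  with assms(2-6) show ?thesis by blast
qed

lemma conv_from_richer_currency:
  assumes rt: "resource_theory Omega T" and cur: "currency Omega T Cs S"
    and val: "value_function T Omega Cs Val" and ind: "independent T Cs S"
    and "V \<in> S" "W \<in> S" "C1 \<in> Cs" "C1' \<in> Cs" "C2 \<in> Cs"
    and richer: "Val C1 \<le> Val C1'"
    and cv: "conv T (V \<inter> C1) (W \<inter> C2)"
  shows "conv T (V \<inter> C1') (W \<inter> C2)"
proof -
  have "\<forall>C\<in>Cs. \<forall>C'\<in>Cs. Val C' \<ge> Val C \<longleftrightarrow> conv T C' C"
    using val unfolding value_function_def by (elim conjE)
  with richer \<open>C1 \<in> Cs\<close> \<open>C1' \<in> Cs\<close> have "conv T C1' C1" by simp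
  moreover have "\<forall>C\<in>Cs. \<forall>C'\<in>Cs. conv T C C' \<longrightarrow> (\<forall>X\<in>S. conv T (C \<inter> X) (C' \<inter> X))"
    using ind unfolding independent_def by (elim conjE)
  ultimately have "conv T (C1' \<inter> V) (C1 \<inter> V)"
    using \<open>V \<in> S\<close> \<open>C1 \<in> Cs\<close> \<open>C1' \<in> Cs\<close> by simp
  moreover have "conv T (C1 \<inter> V) (C2 \<inter> W)"
    using cv by (simp add: Int_commute)
  ultimately have "conv T (C1' \<inter> V) (C2 \<inter> W)"
    using resource_theory_conv_trans[OF rt
        currency_inter_target_in_spec_space[OF cur ind \<open>C1' \<in> Cs\<close> \<open>V \<in> S\<close>]
        currency_inter_target_in_spec_space[OF cur ind \<open>C1 \<in> Cs\<close> \<open>V \<in> S\<close>]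
        currency_inter_target_in_spec_space[OF cur ind \<open>C2 \<in> Cs\<close> \<open>W \<in> S\<close>]]
    by blast
  then show ?thesis by (simp add: Int_commute)
qed

lemma good_for_poorD1:
  assumes "good_for_poor T Cs S Val"
    and "V \<in> S" "W \<in> S" "C1 \<in> Cs" "C2 \<in> Cs" "C1' \<in> Cs"
    and "conv T (V \<inter> C1) (W \<inter> C2)"
    and "Val C1 - Val C2 \<le> Val C1'"
    and "ereal (Val C1') < c_sup Cs Val - ereal (Val C2 - Val C1)"
    and "Val C1' \<le> Val C1"
  shows "\<exists>C2'\<in>Cs. conv T (V \<inter> C1') (W \<inter> C2') \<and> Val C2' - Val C1' = Val C2 - Val C1"
  using assms unfolding good_for_poor_def Let_def by auto

lemma below_c_sup_minus_gain:
  assumes "C2 \<in> Cs" "Val C1' < Val C1"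
  shows "ereal (Val C1') < c_sup Cs Val - ereal (Val C2 - Val C1)"
proof -
  have "ereal (Val C2) \<le> c_sup Cs Val"
    unfolding c_sup_def using \<open>C2 \<in> Cs\<close> by (rule SUP_upper)
  then have "ereal (Val C1) \<le> c_sup Cs Val - ereal (Val C2 - Val C1)"
    by (simp add: ereal_le_minus)
  with \<open>Val C1' < Val C1\<close> show ?thesis
    using less_le_trans[of "ereal (Val C1')" "ereal (Val C1)"] by simp
qed

theorem mainTheorem7:
  fixes Omega :: "'a set" and T :: "('a set \<Rightarrow> 'a set) set"
    and Cs S :: "'a set set" and Val :: "'a set \<Rightarrow> real"
    and V W C1 C1' :: "'a set"
  assumes "resource_theory Omega T"
    and "currency Omega T Cs S"
    and "value_function T Omega Cs Val"
    and "independent T Cs S"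
    and "good_for_poor T Cs S Val"
    and "V \<in> S" and "W \<in> S" and "C1 \<in> Cs" and "C1' \<in> Cs"
    and "Val C1 \<ge> Val C1'"
    and "\<forall>C2\<in>Cs. conv T (V \<inter> C1) (W \<inter> C2) \<longrightarrow> Val C1' \<ge> Val C1 - Val C2"
  shows "balance T Cs Val V W C1 \<le> balance T Cs Val V W C1'"
proof (rule balance_le_balanceI)
  fix C2 assume C2: "C2 \<in> Cs" and cv: "conv T (V \<inter> C1) (W \<inter> C2)"
  show "\<exists>C2'\<in>Cs. conv T (V \<inter> C1') (W \<inter> C2') \<and> Val C2' - Val C1' = Val C2 - Val C1"
  proof (cases "Val C1' = Val C1")
    case True
    then have "conv T (V \<inter> C1') (W \<inter> C2)"
      using conv_from_richer_currency[OF assms(1-4,6-9) C2 _ cv] by simp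
    with C2 True show ?thesis by (intro bexI[of _ C2]) simp_all
  next
    case False
    with assms(10) have "Val C1' < Val C1" by simp
    have "Val C1 - Val C2 \<le> Val C1'"
      using assms(11) C2 cv by simp
    moreover from \<open>Val C1' < Val C1\<close>
    have "ereal (Val C1') < c_sup Cs Val - ereal (Val C2 - Val C1)"
      by (rule below_c_sup_minus_gain[OF C2])
    ultimately show ?thesis
      by (rule good_for_poorD1[OF assms(5-8) C2 assms(9) cv _ _ assms(10)])
  qed
qed

end
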